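(* For every $n\equiv 3\pmod 4$ with $n\ge 7$, there exists a Heffter array $H(n;3)$.
   Context: A Heffter array $H(n;k)$ is an $n\times n$ array in which some cells are filled with nonzero integers and the others are empty, such that: each row and each column contains exactly $k$ filled cells; the entries of every row and of every column sum to $0$ modulo $2nk+1$; and for each integer $1\le x\le nk$, exactly one of $x$ or $-x$ appears in the array, and it appears exactly once. *)

theory Defs
  imports Main
begin

text \<open>An n x n partially filled array is modelled as a function
  A :: nat => nat => int option, where A i j = None means cell (i,j) is empty;
  rows and columns are indexed by 0..n-1.\<close>

definition heffter_array :: "nat \<Rightarrow> nat \<Rightarrow> (nat \<Rightarrow> nat \<Rightarrow> int option) \<Rightarrow> bool" where
  "heffter_array n k A \<longleftrightarrow>
     (\<forall>i j. A i j \<noteq> None \<longrightarrow> i < n \<and> j < n) \<and>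
     (\<forall>i j x. A i j = Some x \<longrightarrow> x \<noteq> 0) \<and>
     (\<forall>i<n. card {j. j < n \<and> A i j \<noteq> None} = k) \<and>
     (\<forall>j<n. card {i. i < n \<and> A i j \<noteq> None} = k) \<and>
     (\<forall>i<n. (\<Sum>j\<in>{j. j < n \<and> A i j \<noteq> None}. the (A i j)) mod (2 * int n * int k + 1) = 0) \<and>
     (\<forall>j<n. (\<Sum>i\<in>{i. i < n \<and> A i j \<noteq> None}. the (A i j)) mod (2 * int n * int k + 1) = 0) \<and>
     (\<forall>x::int. 1 \<le> x \<and> x \<le> int (n * k) \<longrightarrow>
        (\<exists>!p. p \<in> {0..<n} \<times> {0..<n} \<and>
              (A (fst p) (snd p) = Some x \<or> A (fst p) (snd p) = Some (- x))))"

end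

theory Submission
  imports Defs
begin

text \<open>For n = 4t + 3 the array is circulant: row i is filled in columns i, i + 1, i + 2
  (mod n) with w(i - 1) - 1, q(i) = 1 - w(i - 1) - w(i) and w(i), so that every row and column
  sum telescopes. The sequence w is chosen so that for 1 \<le> i \<le> 4t + 2 the values \<open>\<bar>w i\<bar>\<close> and
  \<open>\<bar>w i - 1\<bar>\<close> are 3v + 1 and 3v + 2 in some order, with v = wclass t i running bijectively over
  0, ..., 4t + 1, while the \<open>\<bar>q i\<bar>\<close> with i \<noteq> 1 are exactly the multiples 3, 6, ..., 12t + 6.
  The remaining values 12t + 7, 12t + 8, 12t + 9 are \<open>\<bar>q 1\<bar>\<close>, \<open>\<bar>w 0 - 1\<bar>\<close> and \<open>\<bar>w 0\<bar>\<close>, so the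
  absolute values of the 3n entries are exactly 1, ..., 3n.\<close>

definition cyc_succ :: "nat \<Rightarrow> nat \<Rightarrow> nat" where
  "cyc_succ n i = (i + 1) mod n"

definition cyc_pred :: "nat \<Rightarrow> nat \<Rightarrow> nat" where
  "cyc_pred n i = (i + n - 1) mod n"

lemma cyc_succ_eq: "i < n \<Longrightarrow> cyc_succ n i = (if i + 1 = n then 0 else i + 1)"
  by (simp add: cyc_succ_def)

lemma cyc_pred_eq:
  assumes "i < n"
  shows "cyc_pred n i = (if i = 0 then n - 1 else i - 1)"
proof (cases i)
  case (Suc m)
  then have "i + n - 1 = m + 1 * n" by simp
  then show ?thesis using assms Suc by (simp only: cyc_pred_def mod_mult_self1) simp
qed (use assms in \<open>simp add: cyc_pred_def\<close>)

lemma cyc_succ_lt: "i < n \<Longrightarrow> cyc_succ n i < n"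
  by (simp add: cyc_succ_eq)

lemma cyc_pred_lt: "i < n \<Longrightarrow> cyc_pred n i < n"
  by (auto simp add: cyc_pred_eq)

lemma cyc_pred_succ: "i < n \<Longrightarrow> cyc_pred n (cyc_succ n i) = i"
  by (auto simp add: cyc_succ_eq cyc_pred_eq)

lemma cyc_succ_pred: "i < n \<Longrightarrow> cyc_succ n (cyc_pred n i) = i"
  by (auto simp add: cyc_succ_eq cyc_pred_eq)

lemma cyc_succ_eq_iff: "i < n \<Longrightarrow> j < n \<Longrightarrow> j = cyc_succ n i \<longleftrightarrow> i = cyc_pred n j"
  using cyc_pred_succ cyc_succ_pred by metis

lemma cyc_succ_neq: "2 \<le> n \<Longrightarrow> i < n \<Longrightarrow> cyc_succ n i \<noteq> i"
  by (simp add: cyc_succ_eq)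

lemma cyc_succ_succ_neq: "3 \<le> n \<Longrightarrow> i < n \<Longrightarrow> cyc_succ n (cyc_succ n i) \<noteq> i"
  by (simp add: cyc_succ_eq)

lemma cyc_pred_neq: "2 \<le> n \<Longrightarrow> j < n \<Longrightarrow> cyc_pred n j \<noteq> j"
  by (auto simp add: cyc_pred_eq)

lemma cyc_pred_pred_neq: "3 \<le> n \<Longrightarrow> j < n \<Longrightarrow> cyc_pred n (cyc_pred n j) \<noteq> j"
  by (auto simp add: cyc_pred_eq)

definition circulant :: "nat \<Rightarrow> (nat \<Rightarrow> nat \<Rightarrow> int) \<Rightarrow> nat \<Rightarrow> nat \<Rightarrow> int option" where
  "circulant n v i j =
     (if i < n \<and> j < n then
        if j = i then Some (v 0 i)
        else if j = cyc_succ n i then Some (v 1 i)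
        else if j = cyc_succ n (cyc_succ n i) then Some (v 2 i)
        else None
      else None)"

lemma circulant_diagonal:
  assumes "3 \<le> n" "d < 3" "i < n"
  shows "circulant n v i ((cyc_succ n ^^ d) i) = Some (v d i)"
proof -
  have "d = 0 \<or> d = 1 \<or> d = 2" using assms(2) by arith
  then show ?thesis
    using assms cyc_succ_lt[of i n] cyc_succ_lt[of "cyc_succ n i" n]
      cyc_succ_neq[of n i] cyc_succ_neq[of n "cyc_succ n i"] cyc_succ_succ_neq[of n i]
    by (auto simp add: circulant_def numeral_2_eq_2)
qed

lemma circulant_SomeE:
  assumes "circulant n v i j = Some x"
  obtains d where "d < 3" "i < n" "j = (cyc_succ n ^^ d) i" "x = v d i"
proof -
  have "i < n" and "(j = i \<and> x = v 0 i) \<or> (j = cyc_succ n i \<and> x = v 1 i)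
      \<or> (j = cyc_succ n (cyc_succ n i) \<and> x = v 2 i)"
    using assms by (auto simp add: circulant_def split: if_splits)
  moreover have "cyc_succ n (cyc_succ n i) = (cyc_succ n ^^ 2) i"
    by (simp add: numeral_2_eq_2)
  ultimately show ?thesis
    using that[of 0] that[of 1] that[of 2] by auto
qed

lemma circulant_row:
  "i < n \<Longrightarrow> {j. j < n \<and> circulant n v i j \<noteq> None} = {i, cyc_succ n i, cyc_succ n (cyc_succ n i)}"
  using cyc_succ_lt[of i n] cyc_succ_lt[of "cyc_succ n i" n] by (auto simp add: circulant_def)

lemma circulant_col:
  assumes "j < n"
  shows "{i. i < n \<and> circulant n v i j \<noteq> None} = {j, cyc_pred n j, cyc_pred n (cyc_pred n j)}"
proof -
  have pred_lt: "cyc_pred n j < n" "cyc_pred n (cyc_pred n j) < n"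
    using assms by (simp_all add: cyc_pred_lt)
  have "circulant n v i j \<noteq> None \<longleftrightarrow> i = j \<or> i = cyc_pred n j \<or> i = cyc_pred n (cyc_pred n j)"
    if "i < n" for i
    using that assms pred_lt cyc_succ_eq_iff[of i n j]
      cyc_succ_eq_iff[of "cyc_succ n i" n j] cyc_succ_eq_iff[of i n "cyc_pred n j"] cyc_succ_lt[of i n]
    by (auto simp add: circulant_def)
  then show ?thesis using assms pred_lt by auto
qed

lemma circulant_row_sum:
  assumes "3 \<le> n" "i < n"
  shows "(\<Sum>j\<in>{j. j < n \<and> circulant n v i j \<noteq> None}. the (circulant n v i j)) = v 0 i + v 1 i + v 2 i"
  unfolding circulant_row[OF assms(2)]
  using assms circulant_diagonal[of n 0 i v] circulant_diagonal[of n 1 i v] circulant_diagonal[of n 2 i v]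
    cyc_succ_neq[of n i] cyc_succ_succ_neq[of n i] cyc_succ_neq[of n "cyc_succ n i"] cyc_succ_lt[of i n]
  by (simp add: numeral_2_eq_2)

lemma circulant_col_sum:
  assumes "3 \<le> n" "j < n"
  shows "(\<Sum>i\<in>{i. i < n \<and> circulant n v i j \<noteq> None}. the (circulant n v i j))
           = v 0 j + v 1 (cyc_pred n j) + v 2 (cyc_pred n (cyc_pred n j))"
proof -
  let ?p = "cyc_pred n j" and ?pp = "cyc_pred n (cyc_pred n j)"
  have lt: "?p < n" "?pp < n" using assms(2) by (simp_all add: cyc_pred_lt)
  have "circulant n v ?p ((cyc_succ n ^^ 1) ?p) = Some (v 1 ?p)"
    and "circulant n v ?pp ((cyc_succ n ^^ 2) ?pp) = Some (v 2 ?pp)"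
    using assms lt by (simp_all only: circulant_diagonal)
  then have "circulant n v ?p j = Some (v 1 ?p)" "circulant n v ?pp j = Some (v 2 ?pp)"
    using assms lt by (simp_all add: numeral_2_eq_2 cyc_succ_pred)
  moreover have "circulant n v j j = Some (v 0 j)"
    using circulant_diagonal[of n 0 j v] assms by simp
  ultimately show ?thesis
    unfolding circulant_col[OF assms(2)]
    using assms cyc_pred_neq[of n j] cyc_pred_neq[of n ?p] cyc_pred_pred_neq[of n j] lt
    by simp
qed

lemma card_circulant_row:
  assumes "3 \<le> n" "i < n"
  shows "card {j. j < n \<and> circulant n v i j \<noteq> None} = 3"
  unfolding circulant_row[OF assms(2)]
  using assms cyc_succ_lt[of i n] cyc_succ_neq[of n i] cyc_succ_neq[of n "cyc_succ n i"]
    cyc_succ_succ_neq[of n i]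
  by simp

lemma card_circulant_col:
  assumes "3 \<le> n" "j < n"
  shows "card {i. i < n \<and> circulant n v i j \<noteq> None} = 3"
  unfolding circulant_col[OF assms(2)]
  using assms cyc_pred_lt[of j n] cyc_pred_neq[of n j] cyc_pred_neq[of n "cyc_pred n j"]
    cyc_pred_pred_neq[of n j]
  by simp

lemma circulant_unique_cell:
  assumes n: "3 \<le> n"
    and bij: "bij_betw (\<lambda>(d, i). \<bar>v d i\<bar>) ({0..<3} \<times> {0..<n}) {1..3 * int n}"
    and x: "1 \<le> x" "x \<le> 3 * int n"
  shows "\<exists>!p. p \<in> {0..<n} \<times> {0..<n} \<and>
    (circulant n v (fst p) (snd p) = Some x \<or> circulant n v (fst p) (snd p) = Some (- x))"
proof -
  have "x \<in> (\<lambda>(d, i). \<bar>v d i\<bar>) ` ({0..<3} \<times> {0..<n})"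
    using x bij_betw_imp_surj_on[OF bij] by simp
  then obtain d i where di: "d < 3" "i < n" "\<bar>v d i\<bar> = x" by auto
  let ?j = "(cyc_succ n ^^ d) i"
  have cell: "circulant n v i ?j = Some (v d i)" using circulant_diagonal[OF n di(1,2)] .
  then have "?j < n" by (simp add: circulant_def split: if_splits)
  show ?thesis
  proof (rule ex1I[of _ "(i, ?j)"], goal_cases)
    case 1
    show ?case using cell \<open>?j < n\<close> di by auto
  next
    case (2 p)
    then obtain y where y: "circulant n v (fst p) (snd p) = Some y" "\<bar>y\<bar> = x"
      using x(1) by auto
    obtain d' where d': "d' < 3" "fst p < n" "snd p = (cyc_succ n ^^ d') (fst p)" "y = v d' (fst p)"
      using y(1) by (rule circulant_SomeE)
    have "(d', fst p) = (d, i)"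
      using inj_onD[OF bij_betw_imp_inj_on[OF bij], of "(d', fst p)" "(d, i)"] d' di y(2) by auto
    then show "p = (i, ?j)" using d'(3) by (auto simp add: prod_eq_iff)
  qed
qed

lemma heffter_array_circulant:
  assumes n: "3 \<le> n"
    and rows: "\<And>i. i < n \<Longrightarrow> (v 0 i + v 1 i + v 2 i) mod (6 * int n + 1) = 0"
    and cols: "\<And>j. j < n \<Longrightarrow>
      (v 0 j + v 1 (cyc_pred n j) + v 2 (cyc_pred n (cyc_pred n j))) mod (6 * int n + 1) = 0"
    and bij: "bij_betw (\<lambda>(d, i). \<bar>v d i\<bar>) ({0..<3} \<times> {0..<n}) {1..3 * int n}"
  shows "heffter_array n 3 (circulant n v)"
proof -
  let ?A = "circulant n v"
  have nonzero: "x \<noteq> 0" if entry: "?A i j = Some x" for i j x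
  proof -
    obtain d where "d < 3" "i < n" "x = v d i" using entry by (rule circulant_SomeE)
    then have "\<bar>x\<bar> \<in> {1..3 * int n}" using bij_betwE[OF bij] by auto
    then show ?thesis by auto
  qed
  have inside: "?A i j \<noteq> None \<Longrightarrow> i < n \<and> j < n" for i j
    by (simp add: circulant_def split: if_splits)
  have modulus: "2 * int n * int 3 + 1 = 6 * int n + 1" by simp
  show ?thesis
    unfolding heffter_array_def modulus
  proof (intro conjI allI impI)
    show "(\<Sum>j\<in>{j. j < n \<and> ?A i j \<noteq> None}. the (?A i j)) mod (6 * int n + 1) = 0" if "i < n" for i
      using that by (simp only: circulant_row_sum[OF n] rows)
  next
    show "(\<Sum>i\<in>{i. i < n \<and> ?A i j \<noteq> None}. the (?A i j)) mod (6 * int n + 1) = 0" if "j < n" for j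
      using that by (simp only: circulant_col_sum[OF n] cols)
  next
    show "\<exists>!p. p \<in> {0..<n} \<times> {0..<n} \<and> (?A (fst p) (snd p) = Some x \<or> ?A (fst p) (snd p) = Some (- x))"
      if "1 \<le> x \<and> x \<le> int (n * 3)" for x
      using that by (intro circulant_unique_cell[OF n bij]) auto
  qed (use inside nonzero card_circulant_row[OF n] card_circulant_col[OF n] in auto)
qed

text \<open>Entry on diagonal d of row i. Rows and columns sum to 0, except that the shift of
  the entry of row 0 by the modulus makes row 0 and column 1 sum to 6n + 1.\<close>

definition telescoping_entries :: "nat \<Rightarrow> (nat \<Rightarrow> int) \<Rightarrow> nat \<Rightarrow> nat \<Rightarrow> int" where
  "telescoping_entries n w d i =
     (if d = 0 then w (cyc_pred n i) - 1
      else if d = 1 then 1 - w (cyc_pred n i) - w i + (if i = 0 then 6 * int n + 1 else 0)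
      else w i)"

lemma heffter_array_telescoping_entries:
  assumes "3 \<le> n"
    and "bij_betw (\<lambda>(d, i). \<bar>telescoping_entries n w d i\<bar>) ({0..<3} \<times> {0..<n}) {1..3 * int n}"
  shows "heffter_array n 3 (circulant n (telescoping_entries n w))"
  by (rule heffter_array_circulant) (use assms in \<open>simp_all add: telescoping_entries_def\<close>)

lemma bij_betw_if_left_inverse_card:
  assumes "finite B" "card A = card B"
    and "\<And>x. x \<in> A \<Longrightarrow> f x \<in> B" "\<And>x. x \<in> A \<Longrightarrow> g (f x) = x"
  shows "bij_betw f A B"
proof -
  have inj: "inj_on f A" using assms(4) by (rule inj_on_inverseI)
  have "f ` A = B"
    using card_subset_eq[OF assms(1), of "f ` A"] assms(2,3) card_image[OF inj] by auto
  with inj show ?thesis by (simp add: bij_betw_def)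
qed

definition wclass :: "nat \<Rightarrow> nat \<Rightarrow> nat" where
  "wclass t i = (if i = 4 * t + 2 then 4 * t + 1 else if odd i then i div 2 else 4 * t + 1 - i div 2)"

definition wseq :: "nat \<Rightarrow> nat \<Rightarrow> int" where
  "wseq t i =
     (if i = 0 then 12 * int t + 9
      else if (even i \<longleftrightarrow> i \<le> 2 * t) \<longleftrightarrow> i < 4 * t then 3 * int (wclass t i) + 2
      else - (3 * int (wclass t i) + 1))"

definition wclass_index :: "nat \<Rightarrow> nat \<Rightarrow> nat" where
  "wclass_index t v = (if v \<le> 2 * t then 2 * v + 1 else if v \<le> 4 * t then 2 * (4 * t - v) + 2 else 4 * t + 2)"

lemma wseq_zero [simp]: "wseq t 0 = 12 * int t + 9"
  by (simp add: wseq_def)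

lemma nat_pos_double_cases: "1 \<le> (i::nat) \<Longrightarrow> \<exists>a. i = 2 * a + 1 \<or> i = 2 * a + 2"
  by presburger

lemma wclass_index_wclass:
  assumes "1 \<le> i" "i < 4 * t + 3"
  shows "wclass t i \<le> 4 * t + 1 \<and> wclass_index t (wclass t i) = i"
proof -
  obtain a where "i = 2 * a + 1 \<or> i = 2 * a + 2" using nat_pos_double_cases[OF assms(1)] by blast
  then show ?thesis using assms by (auto simp add: wclass_def wclass_index_def)
qed

lemma wseq_odd:
  "i = 2 * a + 1 \<Longrightarrow> a < 2 * t \<Longrightarrow> wseq t i = (if a < t then - (3 * int a + 1) else 3 * int a + 2)"
  by (simp add: wseq_def wclass_def)

lemma wseq_even:
  "i = 2 * a + 2 \<Longrightarrow> a + 1 < 2 * t \<Longrightarrow>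
     wseq t i = (if a < t then 12 * int t - 3 * int a + 2 else - (12 * int t - 3 * int a + 1))"
  by (auto simp add: wseq_def wclass_def of_nat_diff)

lemma wseq_top:
  assumes "1 \<le> t"
  shows "wseq t (4 * t) = 6 * int t + 5" "wseq t (4 * t + 1) = - (6 * int t + 1)" "wseq t (4 * t + 2) = 12 * int t + 5"
  using assms by (simp_all add: wseq_def wclass_def)

definition qclass :: "nat \<Rightarrow> nat \<Rightarrow> nat" where
  "qclass t i =
     (if i = 0 then 2
      else if i = 2 * t + 1 then 4 * t + 2
      else if i = 4 * t then 4 * t + 1
      else if i = 4 * t + 1 then 1
      else if i = 4 * t + 2 then 2 * t + 1
      else 4 * t + 2 - i)"

definition qclass_index :: "nat \<Rightarrow> nat \<Rightarrow> nat" where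
  "qclass_index t l =
     (if l = 2 then 0
      else if l = 4 * t + 2 then 2 * t + 1
      else if l = 4 * t + 1 then 4 * t
      else if l = 1 then 4 * t + 1
      else if l = 2 * t + 1 then 4 * t + 2
      else 4 * t + 2 - l)"

lemma middle_index_cases:
  fixes t i :: nat
  assumes i: "i < 4 * t + 3" "i \<noteq> 1"
  obtains (zero) "i = 0" | (odd_low) a where "0 < a" "a < t" "i = 2 * a + 1"
    | (mid) "i = 2 * t + 1" | (odd_high) a where "t < a" "a < 2 * t" "i = 2 * a + 1"
    | (even_low) a where "a < t" "i = 2 * a + 2" | (even_high) a where "t \<le> a" "a + 1 < 2 * t" "i = 2 * a + 2"
    | (top) "i = 4 * t" | (top1) "i = 4 * t + 1" | (top2) "i = 4 * t + 2"
proof (cases "i = 0")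
  case False
  then obtain a where "i = 2 * a + 1 \<or> i = 2 * a + 2" using nat_pos_double_cases[of i] by auto
  then show thesis
  proof (elim disjE)
    assume odd: "i = 2 * a + 1"
    consider "a < t" | "a = t" | "t < a" "a < 2 * t" | "a = 2 * t" using odd i by linarith
    then show thesis
      by cases (use odd i in \<open>auto intro: odd_low mid odd_high top1\<close>)
  next
    assume even: "i = 2 * a + 2"
    consider "a < t" | "t \<le> a" "a + 1 < 2 * t" | "a + 1 = 2 * t" | "a = 2 * t" using even i by linarith
    then show thesis
      by cases (use even in \<open>auto intro: even_low even_high top top2\<close>)
  qed
qed (rule zero)

lemma middle_entry_qclass:
  assumes t: "1 \<le> t" and i: "i < 4 * t + 3" "i \<noteq> 1"
  shows "\<bar>telescoping_entries (4 * t + 3) (wseq t) 1 i\<bar> = 3 * int (qclass t i)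
    \<and> 1 \<le> qclass t i \<and> qclass t i \<le> 4 * t + 2 \<and> qclass_index t (qclass t i) = i"
proof -
  let ?q = "telescoping_entries (4 * t + 3) (wseq t) 1 i"
  have q: "?q = 1 - wseq t (i - 1) - wseq t i" if "i \<noteq> 0"
    using that i by (simp add: telescoping_entries_def cyc_pred_eq)
  from i show ?thesis
  proof (cases rule: middle_index_cases)
    case zero
    then show ?thesis using wseq_top(3)[OF t]
      by (simp add: telescoping_entries_def cyc_pred_eq wseq_def qclass_def qclass_index_def)
  next
    case (odd_low a)
    then have "i - 1 = 2 * (a - 1) + 2" by simp
    then show ?thesis using odd_low q wseq_even[of "i - 1" "a - 1" t] wseq_odd[of i a t]
      by (simp add: qclass_def qclass_index_def of_nat_diff) presburger
  next
    case mid
    then have "i - 1 = 2 * (t - 1) + 2" using t by simp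
    then show ?thesis using mid q t wseq_even[of "i - 1" "t - 1" t] wseq_odd[of i t t]
      by (simp add: qclass_def qclass_index_def of_nat_diff)
  next
    case (odd_high a)
    then have "i - 1 = 2 * (a - 1) + 2" by simp
    then show ?thesis using odd_high q wseq_even[of "i - 1" "a - 1" t] wseq_odd[of i a t]
      by (simp add: qclass_def qclass_index_def of_nat_diff) presburger
  next
    case (even_low a)
    then have "i - 1 = 2 * a + 1" by simp
    then show ?thesis using even_low q wseq_odd[of "i - 1" a t] wseq_even[of i a t]
      by (simp add: qclass_def qclass_index_def) presburger
  next
    case (even_high a)
    then have "i - 1 = 2 * a + 1" by simp
    then show ?thesis using even_high q wseq_odd[of "i - 1" a t] wseq_even[of i a t]
      by (simp add: qclass_def qclass_index_def) presburger
  next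
    case top
    then have "i - 1 = 2 * (2 * t - 1) + 1" using t by simp
    then show ?thesis using top q t wseq_odd[of "i - 1" "2 * t - 1" t] wseq_top(1)[OF t]
      by (auto simp add: qclass_def qclass_index_def of_nat_diff)
  qed (use q t wseq_top[OF t] in \<open>simp_all add: qclass_def qclass_index_def\<close>)
qed

text \<open>Left inverse of the absolute values of the entries: a multiple of 3 comes from
  the middle diagonal, any other value from a pair \<open>\<bar>w k\<bar>, \<bar>w k - 1\<bar>\<close> of class \<open>x div 3\<close>.\<close>

definition decode :: "nat \<Rightarrow> int \<Rightarrow> nat \<times> nat" where
  "decode t x =
     (if x = 12 * int t + 9 then (2, 0)
      else if x = 12 * int t + 8 then (0, 1)
      else if x = 12 * int t + 7 then (1, 1)
      else if 3 dvd x then (1, qclass_index t (nat (x div 3)))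
      else let k = wclass_index t (nat (x div 3)) in
        if \<bar>wseq t k\<bar> = x then (2, k) else (0, cyc_succ (4 * t + 3) k))"

lemma decode_nonmultiple:
  assumes "x = 3 * int v + 1 \<or> x = 3 * int v + 2" "v \<le> 4 * t + 1"
  shows "decode t x =
    (let k = wclass_index t v in if \<bar>wseq t k\<bar> = x then (2, k) else (0, cyc_succ (4 * t + 3) k))"
proof -
  have "\<not> 3 dvd x" "x div 3 = int v" using assms(1) by presburger+
  moreover have "x \<le> 12 * int t + 6" using assms by linarith
  ultimately show ?thesis by (simp add: decode_def)
qed

lemma decode_wseq:
  assumes k: "1 \<le> k" "k < 4 * t + 3"
  shows "\<bar>wseq t k\<bar> \<in> {1..12 * int t + 5} \<and> decode t \<bar>wseq t k\<bar> = (2, k)"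
    and "\<bar>wseq t k - 1\<bar> \<in> {1..12 * int t + 5} \<and> decode t \<bar>wseq t k - 1\<bar> = (0, cyc_succ (4 * t + 3) k)"
proof -
  let ?v = "wclass t k"
  have v: "?v \<le> 4 * t + 1" "wclass_index t ?v = k"
    using wclass_index_wclass[OF k] by simp_all
  have "wseq t k = 3 * int ?v + 2 \<or> wseq t k = - (3 * int ?v + 1)"
    using k(1) by (simp add: wseq_def)
  then have pair: "(\<bar>wseq t k\<bar> = 3 * int ?v + 2 \<and> \<bar>wseq t k - 1\<bar> = 3 * int ?v + 1)
      \<or> (\<bar>wseq t k\<bar> = 3 * int ?v + 1 \<and> \<bar>wseq t k - 1\<bar> = 3 * int ?v + 2)"
    by auto
  have "\<bar>wseq t k\<bar> \<le> 12 * int t + 5" "\<bar>wseq t k - 1\<bar> \<le> 12 * int t + 5"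
    using pair v(1) by linarith+
  moreover have "decode t \<bar>wseq t k\<bar> = (2, k)"
    using decode_nonmultiple[of "\<bar>wseq t k\<bar>" ?v t] pair v by auto
  moreover have "decode t \<bar>wseq t k - 1\<bar> = (0, cyc_succ (4 * t + 3) k)"
    using decode_nonmultiple[of "\<bar>wseq t k - 1\<bar>" ?v t] pair v by auto
  ultimately show "\<bar>wseq t k\<bar> \<in> {1..12 * int t + 5} \<and> decode t \<bar>wseq t k\<bar> = (2, k)"
    and "\<bar>wseq t k - 1\<bar> \<in> {1..12 * int t + 5} \<and> decode t \<bar>wseq t k - 1\<bar> = (0, cyc_succ (4 * t + 3) k)"
    using pair by auto
qed

lemma decode_entry:
  assumes t: "1 \<le> t" and e: "d < 3" "i < 4 * t + 3"
  shows "\<bar>telescoping_entries (4 * t + 3) (wseq t) d i\<bar> \<in> {1..12 * int t + 9}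
    \<and> decode t \<bar>telescoping_entries (4 * t + 3) (wseq t) d i\<bar> = (d, i)"
proof -
  consider (diagonal) "d = 0" | (middle) "d = 1" | (outer) "d = 2" using e(1) by arith
  then show ?thesis
  proof cases
    case diagonal
    let ?k = "cyc_pred (4 * t + 3) i"
    have "telescoping_entries (4 * t + 3) (wseq t) d i = wseq t ?k - 1"
      using diagonal by (simp add: telescoping_entries_def)
    moreover have "cyc_succ (4 * t + 3) ?k = i" using e(2) by (rule cyc_succ_pred)
    moreover have "?k < 4 * t + 3" using e(2) by (rule cyc_pred_lt)
    moreover have "?k = 0 \<Longrightarrow> i = 1" using e(2) by (auto simp add: cyc_pred_eq split: if_splits)
    ultimately show ?thesis
      using diagonal decode_wseq(2)[of ?k t] by (cases "?k = 0") (auto simp add: decode_def)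
  next
    case middle
    show ?thesis
    proof (cases "i = 1")
      case True
      moreover have "wseq t 1 = -1" using t by (simp add: wseq_def wclass_def)
      ultimately show ?thesis using middle by (simp add: telescoping_entries_def cyc_pred_eq decode_def)
    next
      case False
      with middle_entry_qclass[OF t e(2) False] show ?thesis using middle by (auto simp add: decode_def)
    qed
  next
    case outer
    then show ?thesis
      using decode_wseq(1)[of i t] e(2)
      by (cases "i = 0") (auto simp add: telescoping_entries_def decode_def)
  qed
qed

lemma bij_betw_abs_entries_wseq:
  assumes "1 \<le> t"
  shows "bij_betw (\<lambda>(d, i). \<bar>telescoping_entries (4 * t + 3) (wseq t) d i\<bar>)
    ({0..<3} \<times> {0..<4 * t + 3}) {1..3 * int (4 * t + 3)}"
proof (rule bij_betw_if_left_inverse_card[where g = "decode t"])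
  show "card ({0..<3::nat} \<times> {0..<4 * t + 3}) = card {1..3 * int (4 * t + 3)}"
    by (simp add: card_cartesian_product)
qed (use decode_entry[OF assms] in auto)

theorem lemma4p1:
  fixes n :: nat
  assumes "n mod 4 = 3" and "n \<ge> 7"
  shows "\<exists>A. heffter_array n 3 A"
proof -
  define t where "t = n div 4"
  have n: "n = 4 * t + 3" and t: "1 \<le> t"
    using assms unfolding t_def by arith+
  have "heffter_array n 3 (circulant n (telescoping_entries n (wseq t)))"
    unfolding n
    by (intro heffter_array_telescoping_entries bij_betw_abs_entries_wseq t) simp
  then show ?thesis by blast
qed

end
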